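(* Let $\Pi=\{P_0,P_1,Q_1,Q_2,Q_3\}$ (five unary relation symbols) and $\mathcal{R}=\{R\}$ (one binary relation symbol). Let $\mathcal{F}$ be the class of all pointed $\mathrm{SB}(\Pi)$-models $(M,w)$ whose domain is finite. Then there exists a $(\Pi,\mathcal{R})$-automaton $A$ that halts in $\mathcal{F}$ and is strongly nonlocal in $\mathcal{F}$.
   Context: Let $\Pi$ be a finite set of unary relation symbols and $\mathcal{R}=\{R_1,\dots,R_k\}$ a finite set of binary relation symbols. A $(\Pi,\mathcal{R})$-model $M$ consists of a nonempty domain $W$ together with interpretations $P^M\subseteq W$ for $P\in\Pi$ and $R_i^M\subseteq W\times W$; a pointed model is a pair $(M,w)$ with $w\in W$. An $\mathrm{SB}(\Pi)$-model is a $(\Pi,\{R\})$-model in which $R^M$ is symmetric and irreflexive. A $(\Pi,\mathcal{R})$-automaton is a tuple $A=(Q,\mathcal{M},\pi,\delta,\mu,F,G)$ where $Q$ (states) and $\mathcal{M}$ (messages) are nonempty finite or countably infinite sets, $\pi:\mathrm{Pow}(\Pi)\to Q$, $\delta:(\mathrm{Pow}(\mathcal{M}))^k\times Q\to Q$, $\mu:Q\times\mathcal{R}\to\mathcal{M}$, $F\subseteq Q$ (accepting states) and $G\subseteq Q\setminus F$ (rejecting states). Run on a model $M$ with domain $W$, it defines configurations $f_n:W\to Q$: $f_0(w)=\pi(\{P\in\Pi: w\in P^M\})$ and $f_{n+1}(w)=\delta((N_1,\dots,N_k),f_n(w))$ where $N_i=\{\mu(f_n(v),R_i): (w,v)\in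 R_i^M\}$. $A$ accepts $(M,w)$ in round $n$ if $f_n(w)\in F$ and $f_m(w)\notin G$ for all $m<n$; $A$ rejects $(M,w)$ in round $n$ if $f_n(w)\in G$ and $f_m(w)\notin F$ for all $m<n$. $A$ accepts (rejects) $(M,w)$ if it does so in some round. For a class $\mathcal{K}$ of pointed models: $A$ converges in $\mathcal{K}$ if it accepts or rejects every $(M,w)\in\mathcal{K}$; $A$ halts in $\mathcal{K}$ if it converges in $\mathcal{K}$ and, for every $(M,w)\in\mathcal{K}$, once $f_n(w)\in F\cup G$ for the first time, $f_m(w)=f_n(w)$ for all $m\ge n$. $A$ specifies a local algorithm in $\mathcal{K}$ if there is $n\in\mathbb{N}$ such that every $(M,w)\in\mathcal{K}$ is accepted or rejected by $A$ in some round $m\le n$. $A$ is strongly nonlocal in $\mathcal{K}$ if there is no $(\Pi,\mathcal{R})$-automaton $B$ that specifies a local algorithm in $\mathcal{K}$ and accepts exactly the same pointed models in $\mathcal{K}$ as $A$. *)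

theory Defs
  imports Main
begin

text \<open>Unary symbols Pi = {P0,P1,Q1,Q2,Q3}; binary symbols indexed by a type 'r
  (for the theorem, 'r = unit, i.e. the single symbol R).
  Domains of models are sets of natural numbers (every finite domain is isomorphic
  to one); states and messages are natural numbers drawn from explicit carrier sets
  (every finite or countably infinite set embeds into nat).\<close>

datatype usym = P0 | P1 | Q1 | Q2 | Q3

record ('p, 'r) model =
  dom :: "nat set"
  val :: "'p \<Rightarrow> nat set"
  rel :: "'r \<Rightarrow> (nat \<times> nat) set"

definition is_model :: "('p, 'r) model \<Rightarrow> bool" where
  "is_model M \<longleftrightarrow> dom M \<noteq> {} \<and> (\<forall>P. val M P \<subseteq> dom M) \<and>
     (\<forall>i. rel M i \<subseteq> dom M \<times> dom M)"

text \<open>An automaton (Q, Msgs, pi, delta, mu, F, G). A k-tuple of message sets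
  (one per binary symbol) is represented as a function 'r => nat set.\<close>
record ('p, 'r) automaton =
  states :: "nat set"
  msgs :: "nat set"
  init :: "'p set \<Rightarrow> nat"
  trans :: "('r \<Rightarrow> nat set) \<Rightarrow> nat \<Rightarrow> nat"
  msg :: "nat \<Rightarrow> 'r \<Rightarrow> nat"
  acc :: "nat set"
  rej :: "nat set"

definition is_automaton :: "('p, 'r) automaton \<Rightarrow> bool" where
  "is_automaton A \<longleftrightarrow> states A \<noteq> {} \<and> msgs A \<noteq> {} \<and>
     (\<forall>S. init A S \<in> states A) \<and>
     (\<forall>N q. (\<forall>i. N i \<subseteq> msgs A) \<longrightarrow> q \<in> states A \<longrightarrow> trans A N q \<in> states A) \<and>
     (\<forall>q i. q \<in> states A \<longrightarrow> msg A q i \<in> msgs A) \<and>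
     acc A \<subseteq> states A \<and> rej A \<subseteq> states A - acc A"

primrec config :: "('p, 'r) automaton \<Rightarrow> ('p, 'r) model \<Rightarrow> nat \<Rightarrow> nat \<Rightarrow> nat" where
  "config A M 0 w = init A {P. w \<in> val M P}"
| "config A M (Suc n) w =
     trans A (\<lambda>i. {msg A (config A M n v) i | v. (w, v) \<in> rel M i}) (config A M n w)"

definition accepts_in :: "('p, 'r) automaton \<Rightarrow> ('p, 'r) model \<Rightarrow> nat \<Rightarrow> nat \<Rightarrow> bool" where
  "accepts_in A M w n \<longleftrightarrow> config A M n w \<in> acc A \<and> (\<forall>m<n. config A M m w \<notin> rej A)"

definition rejects_in :: "('p, 'r) automaton \<Rightarrow> ('p, 'r) model \<Rightarrow> nat \<Rightarrow> nat \<Rightarrow> bool" where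
  "rejects_in A M w n \<longleftrightarrow> config A M n w \<in> rej A \<and> (\<forall>m<n. config A M m w \<notin> acc A)"

definition accepts :: "('p, 'r) automaton \<Rightarrow> ('p, 'r) model \<Rightarrow> nat \<Rightarrow> bool" where
  "accepts A M w \<longleftrightarrow> (\<exists>n. accepts_in A M w n)"

definition rejects :: "('p, 'r) automaton \<Rightarrow> ('p, 'r) model \<Rightarrow> nat \<Rightarrow> bool" where
  "rejects A M w \<longleftrightarrow> (\<exists>n. rejects_in A M w n)"

definition converges :: "('p, 'r) automaton \<Rightarrow> (('p, 'r) model \<times> nat) set \<Rightarrow> bool" where
  "converges A K \<longleftrightarrow> (\<forall>(M, w) \<in> K. accepts A M w \<or> rejects A M w)"

definition halts :: "('p, 'r) automaton \<Rightarrow> (('p, 'r) model \<times> nat) set \<Rightarrow> bool" where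
  "halts A K \<longleftrightarrow> converges A K \<and>
     (\<forall>(M, w) \<in> K. \<forall>n.
        (config A M n w \<in> acc A \<union> rej A \<and> (\<forall>m<n. config A M m w \<notin> acc A \<union> rej A))
        \<longrightarrow> (\<forall>m\<ge>n. config A M m w = config A M n w))"

definition specifies_local :: "('p, 'r) automaton \<Rightarrow> (('p, 'r) model \<times> nat) set \<Rightarrow> bool" where
  "specifies_local A K \<longleftrightarrow>
     (\<exists>n. \<forall>(M, w) \<in> K. \<exists>m\<le>n. accepts_in A M w m \<or> rejects_in A M w m)"

definition strongly_nonlocal :: "('p, 'r) automaton \<Rightarrow> (('p, 'r) model \<times> nat) set \<Rightarrow> bool" where
  "strongly_nonlocal A K \<longleftrightarrow>
     \<not> (\<exists>B. is_automaton B \<and> specifies_local B K \<and>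
            (\<forall>(M, w) \<in> K. accepts B M w \<longleftrightarrow> accepts A M w))"

definition finite_SB :: "((usym, unit) model \<times> nat) set" where
  "finite_SB = {(M, w). is_model M \<and> w \<in> dom M \<and> finite (dom M) \<and>
       sym (rel M ()) \<and> irrefl (rel M ())}"

end

theory Submission
  imports Defs "HOL-Library.Countable"
begin

(* Colour the nodes by Q1, Q2, Q3 (in this priority) and call a neighbour of the
   next colour in the cycle Q1 -> Q2 -> Q3 -> Q1 a successor.  The automaton lets information
   flow backwards along successor walks: after n rounds a node is Alive with the word of
   P1-bits read along its successor walks of length n, as long as all successors agree.  A
   node without successors (the end of a path) freezes its word (Done) and accepts iff the
   word has odd length.  To halt on every finite model the automaton rejects (Bad) when
   successors disagree or when the collected word contains a fifth power: in a finite model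
   an ever-alive node has an eventually periodic successor walk, whose word contains a fifth
   power.  On paths labelled by the period-doubling sequence, which is fifth-power free, the
   automaton decides the parity of the length; but the paths of lengths 2n+2 and 2n+3 look
   identical from node 0 for n rounds, so no automaton with a uniform round bound accepts
   the same pointed models. *)


subsection \<open>Local agreement and strong nonlocality\<close>

fun agree :: "('p, 'r) model \<Rightarrow> ('p, 'r) model \<Rightarrow> nat \<Rightarrow> nat \<Rightarrow> bool" where
  "agree M1 M2 0 w \<longleftrightarrow> {P. w \<in> val M1 P} = {P. w \<in> val M2 P}"
| "agree M1 M2 (Suc m) w \<longleftrightarrow> agree M1 M2 m w \<and>
     (\<forall>i v. (w, v) \<in> rel M1 i \<longleftrightarrow> (w, v) \<in> rel M2 i) \<and>
     (\<forall>i v. (w, v) \<in> rel M1 i \<longrightarrow> agree M1 M2 m v)"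

lemma agree_mono: "agree M1 M2 n w \<Longrightarrow> m \<le> n \<Longrightarrow> agree M1 M2 m w"
  by (induction n) (auto simp: le_Suc_eq)

lemma config_agree: "agree M1 M2 m w \<Longrightarrow> config A M1 m w = config A M2 m w"
proof (induction m arbitrary: w)
  case (Suc m)
  have edges: "(w, v) \<in> rel M1 i \<longleftrightarrow> (w, v) \<in> rel M2 i" for i v
    using Suc.prems by simp
  have neighbours: "config A M1 m v = config A M2 m v" if "(w, v) \<in> rel M1 i" for i v
    using Suc.prems that by (intro Suc.IH) simp
  have messages: "(\<lambda>i. {msg A (config A M1 m v) i | v. (w, v) \<in> rel M1 i})
      = (\<lambda>i. {msg A (config A M2 m v) i | v. (w, v) \<in> rel M2 i})"
  proof (intro ext Collect_cong iffI)
    fix i x assume "\<exists>v. x = msg A (config A M1 m v) i \<and> (w, v) \<in> rel M1 i"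
    then show "\<exists>v. x = msg A (config A M2 m v) i \<and> (w, v) \<in> rel M2 i"
      using edges neighbours by metis
  next
    fix i x assume "\<exists>v. x = msg A (config A M2 m v) i \<and> (w, v) \<in> rel M2 i"
    then show "\<exists>v. x = msg A (config A M1 m v) i \<and> (w, v) \<in> rel M1 i"
      using edges neighbours by metis
  qed
  have "config A M1 m w = config A M2 m w"
    using Suc.prems by (intro Suc.IH) simp
  then show ?case unfolding config.simps messages by (rule arg_cong)
qed simp

lemma decision_agree:
  assumes "agree M1 M2 n w" "m \<le> n"
  shows "accepts_in A M1 w m \<longleftrightarrow> accepts_in A M2 w m"
    and "rejects_in A M1 w m \<longleftrightarrow> rejects_in A M2 w m"
proof -
  have "config A M1 k w = config A M2 k w" if "k \<le> m" for k
    using agree_mono[OF assms(1)] assms(2) that by (intro config_agree) simp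
  then show "accepts_in A M1 w m \<longleftrightarrow> accepts_in A M2 w m"
    and "rejects_in A M1 w m \<longleftrightarrow> rejects_in A M2 w m"
    by (auto simp: accepts_in_def rejects_in_def)
qed

lemma accepts_iff_accepted_by:
  assumes "accepts_in A M w m \<or> rejects_in A M w m"
  shows "accepts A M w \<longleftrightarrow> (\<exists>k\<le>m. accepts_in A M w k)"
proof
  assume "accepts A M w"
  then obtain k where k: "accepts_in A M w k" by (auto simp: accepts_def)
  show "\<exists>k\<le>m. accepts_in A M w k"
  proof (cases "k \<le> m")
    case False
    then have "config A M m w \<notin> rej A" using k by (simp add: accepts_in_def)
    then have "accepts_in A M w m" using assms by (auto simp: rejects_in_def)
    then show ?thesis by blast
  qed (use k in blast)
qed (auto simp: accepts_def)

lemma strongly_nonlocal_if_indistinguishable: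
  assumes "\<And>n. \<exists>M1 M2 w. (M1, w) \<in> K \<and> (M2, w) \<in> K \<and> agree M1 M2 n w \<and>
                          accepts A M1 w \<and> \<not> accepts A M2 w"
  shows "strongly_nonlocal A K"
  unfolding strongly_nonlocal_def
proof
  assume "\<exists>B. is_automaton B \<and> specifies_local B K \<and>
              (\<forall>(M, w)\<in>K. accepts B M w \<longleftrightarrow> accepts A M w)"
  then obtain B n where local: "\<forall>(M, w)\<in>K. \<exists>m\<le>n. accepts_in B M w m \<or> rejects_in B M w m"
    and same: "\<forall>(M, w)\<in>K. accepts B M w \<longleftrightarrow> accepts A M w"
    unfolding specifies_local_def by blast
  obtain M1 M2 w where in1: "(M1, w) \<in> K" and in2: "(M2, w) \<in> K" and ag: "agree M1 M2 n w"
    and differ: "accepts A M1 w" "\<not> accepts A M2 w"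
    using assms by blast
  obtain m where m: "m \<le> n" and dec1: "accepts_in B M1 w m \<or> rejects_in B M1 w m"
    using local in1 by blast
  have dec2: "accepts_in B M2 w m \<or> rejects_in B M2 w m"
    using dec1 decision_agree[OF ag m] by blast
  have "accepts B M1 w \<longleftrightarrow> accepts B M2 w"
    unfolding accepts_iff_accepted_by[OF dec1] accepts_iff_accepted_by[OF dec2]
    using decision_agree(1)[OF ag] m by (meson order_trans)
  then show False using same in1 in2 differ by auto
qed


subsection \<open>Eventually periodic walks in finite graphs\<close>

text \<open>A walk that visits more nodes than a finite set has, repeats a node; running the
  cycle between the two visits forever gives an infinite walk with the same start that is
  periodic from some point on.\<close>

lemma eventually_periodic_walk:
  assumes fin: "finite S" and in_S: "\<And>i. i \<le> card S \<Longrightarrow> f i \<in> S"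
    and walk: "\<And>i. i < card S \<Longrightarrow> R (f i) (f (Suc i))"
  shows "\<exists>g i p. 0 < p \<and> g 0 = f 0 \<and> (\<forall>k. R (g k) (g (Suc k))) \<and> (\<forall>k\<ge>i. g (k + p) = g k)"
proof -
  have "\<not> inj_on f {0..card S}"
  proof
    assume "inj_on f {0..card S}"
    then have "card (f ` {0..card S}) = Suc (card S)" by (simp add: card_image)
    moreover have "f ` {0..card S} \<subseteq> S" using in_S by auto
    ultimately show False using card_mono[OF fin] by (metis Suc_n_not_le_n)
  qed
  then obtain i j where ij: "i < j" "j \<le> card S" "f i = f j"
    unfolding inj_on_def by (metis atLeastAtMost_iff linorder_neqE_nat)
  define p where "p = j - i"
  define h where "h k = (if k < i then k else i + (k - i) mod p)" for k
  have p: "0 < p" "i + p = j" using ij by (auto simp: p_def)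
  have h_bound: "h k < j" for k
    using ij mod_less_divisor[OF p(1), of "k - i"] by (simp add: h_def p(2)[symmetric])
  have h_Suc: "h (Suc k) = (if Suc (h k) = j then i else Suc (h k))" for k
  proof (cases "i \<le> k")
    case True
    define r where "r = (k - i) mod p"
    have r: "r < p" "h k = i + r" using p True by (simp_all add: r_def h_def)
    have "h (Suc k) = i + Suc r mod p"
      using True by (simp add: h_def r_def Suc_diff_le mod_Suc_eq)
    then show ?thesis using r p by (auto simp: mod_Suc)
  qed (use p in \<open>auto simp: h_def\<close>)
  have "R (f (h k)) (f (h (Suc k)))" for k
    using walk[of "h k"] h_bound[of k] ij by (auto simp: h_Suc)
  moreover have "h (k + p) = h k" if "i \<le> k" for k
  proof -
    have "(k + p - i) mod p = (k - i) mod p"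
      using that by (metis add_diff_assoc2 mod_add_self2)
    then show ?thesis using that by (simp add: h_def)
  qed
  moreover have "h 0 = 0" using ij by (simp add: h_def)
  ultimately show ?thesis
    using p by (intro exI[of _ "f \<circ> h"] exI[of _ i] exI[of _ p]) auto
qed


subsection \<open>The period-doubling sequence is fifth-power free\<close>

definition has_fifth_power :: "'a list \<Rightarrow> bool" where
  "has_fifth_power w \<longleftrightarrow> (\<exists>i p. 0 < p \<and> i + 5 * p \<le> length w \<and>
      (\<forall>k. i \<le> k \<longrightarrow> k < i + 4 * p \<longrightarrow> w ! k = w ! (k + p)))"

fun v2 :: "nat \<Rightarrow> nat" where
  "v2 n = (if n = 0 \<or> odd n then 0 else Suc (v2 (n div 2)))"

declare v2.simps[simp del]

lemma v2_odd: "odd m \<Longrightarrow> v2 m = 0"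
  by (subst v2.simps) simp

lemma v2_mult_power: "odd m \<Longrightarrow> v2 (2 ^ e * m) = e"
proof (induction e)
  case (Suc e)
  have "v2 (2 ^ Suc e * m) = Suc (v2 (2 ^ e * m))"
    using Suc.prems odd_pos by (subst v2.simps) auto
  then show ?case using Suc by simp
qed (simp add: v2_odd)

lemma v2_decomp: "0 < n \<Longrightarrow> \<exists>q. odd q \<and> n = 2 ^ v2 n * q"
proof (induction n rule: v2.induct)
  case (1 n)
  show ?case
  proof (cases "odd n")
    case False
    then have "n \<noteq> 1" by auto
    then have half: "0 < n div 2" using "1.prems" by (simp add: div_greater_zero_iff)
    have "\<exists>q. odd q \<and> n div 2 = 2 ^ v2 (n div 2) * q"
      using "1.prems" False half by (intro "1.IH") auto
    then obtain q where q: "odd q" "n div 2 = 2 ^ v2 (n div 2) * q" by blast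
    have "v2 n = Suc (v2 (n div 2))" using "1.prems" False by (subst v2.simps) simp
    have "n = 2 * (n div 2)" using False by simp
    also have "\<dots> = 2 ^ v2 n * q" using q(2) \<open>v2 n = _\<close> by simp
    finally show ?thesis using q(1) by blast
  qed (simp add: v2_odd)
qed

definition period_doubling :: "nat \<Rightarrow> bool" where
  "period_doubling k \<longleftrightarrow> odd (v2 (Suc k))"

lemma residue_in_window:
  fixes a t M :: nat
  assumes "t < M"
  shows "\<exists>y. a < y \<and> y \<le> a + M \<and> y mod M = t"
proof -
  define D R where "D = Suc a div M" and "R = Suc a mod M"
  have a: "Suc a = M * D + R" "R < M"
    using assms by (simp_all add: D_def R_def)
  show ?thesis
  proof (cases "R \<le> t")
    case True
    then show ?thesis using a assms by (intro exI[of _ "M * D + t"]) auto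
  next
    case False
    have "(Suc D * M + t) mod M = t"
      using assms by (simp only: mod_mult_self3 mod_less)
    then show ?thesis using False a by (intro exI[of _ "Suc D * M + t"]) (auto simp: algebra_simps)
  qed
qed

text \<open>Key property: no window of length 4p of the period-doubling sequence has period p.
  With p = 2^e q, q odd, pick y in the window with v2 y = e + 1; then v2 (y + p) = e,
  so the values at y - 1 and y - 1 + p differ.\<close>

lemma period_doubling_window:
  assumes p: "0 < p"
  shows "\<exists>j. a \<le> j \<and> j < a + 4 * p \<and> period_doubling j \<noteq> period_doubling (j + p)"
proof -
  obtain q where q: "odd q" "p = 2 ^ v2 p * q" using v2_decomp[OF p] by blast
  define e where "e = v2 p"
  have "1 \<le> q" using q(1) by (simp add: odd_pos Suc_leI)
  then have window: "4 * 2 ^ e \<le> 4 * p"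
    using q(2) e_def by (metis mult.right_neutral mult_le_mono2)
  obtain y where y: "a < y" "y \<le> a + 4 * 2 ^ e" "y mod (4 * 2 ^ e) = 2 * 2 ^ e"
    using residue_in_window[of "2 * 2 ^ e" "4 * 2 ^ e" a] by auto
  define s where "s = y div (4 * 2 ^ e)"
  have y_eq: "y = 2 ^ Suc e * (2 * s + 1)"
    using y(3) div_mult_mod_eq[of y "4 * 2 ^ e"] unfolding s_def by (simp add: algebra_simps)
  have y_p_eq: "y + p = 2 ^ e * (2 * (2 * s + 1) + q)"
    using y_eq q e_def by (simp add: algebra_simps)
  have "v2 (y + p) = e"
    unfolding y_p_eq using q(1) by (intro v2_mult_power) simp
  moreover have "v2 y = Suc e"
    unfolding y_eq by (intro v2_mult_power) simp
  moreover have "Suc (y - 1) = y" "Suc (y - 1 + p) = y + p" using y(1) by auto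
  ultimately show ?thesis
    using y window unfolding period_doubling_def by (intro exI[of _ "y - 1"]) auto
qed

lemma period_doubling_fifth_power_free:
  "\<not> has_fifth_power (map period_doubling [k..<k + n])"
proof
  assume "has_fifth_power (map period_doubling [k..<k + n])"
  then obtain i p where p: "0 < p" "i + 5 * p \<le> n"
    and periodic: "\<forall>m. i \<le> m \<longrightarrow> m < i + 4 * p \<longrightarrow>
        map period_doubling [k..<k + n] ! m = map period_doubling [k..<k + n] ! (m + p)"
    unfolding has_fifth_power_def by auto
  obtain j where j: "k + i \<le> j" "j < k + i + 4 * p" "period_doubling j \<noteq> period_doubling (j + p)"
    using period_doubling_window[OF p(1), of "k + i"] by auto
  have "map period_doubling [k..<k + n] ! (j - k) = map period_doubling [k..<k + n] ! (j - k + p)"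
    using periodic j by simp
  then show False using j p by simp
qed


text \<open>Every state records the colour (0, 1, 2 for Q1, Q2, Q3) of its node.  An Alive
  node stores the P1-bits read along its successor walks so far, a Done node has frozen
  that word because the walks ended, and a Bad node has rejected.\<close>

datatype state = Alive nat "bool list" | Done nat "bool list" | Bad nat

instance state :: countable by countable_datatype

fun state_colour :: "state \<Rightarrow> nat" where
  "state_colour (Alive c w) = c" | "state_colour (Done c w) = c" | "state_colour (Bad c) = c"

definition colour :: "usym set \<Rightarrow> nat" where
  "colour S = (if Q2 \<in> S then 1 else if Q3 \<in> S then 2 else 0)"

definition initial :: "usym set \<Rightarrow> state" where
  "initial S = Alive (colour S) [P1 \<in> S]"

definition step :: "state set \<Rightarrow> state \<Rightarrow> state" where
  "step N s = (case s of
     Alive c w \<Rightarrow> (let S = {t\<in>N. state_colour t = Suc c mod 3} in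
        if S = {} then Done c w
        else if (\<exists>u. S = {Alive (Suc c mod 3) u}) then
          (let w' = hd w # (SOME u. S = {Alive (Suc c mod 3) u}) in
             if has_fifth_power w' then Bad c else Alive c w')
        else if (\<exists>u. S = {Done (Suc c mod 3) u}) then
          Done c (hd w # (SOME u. S = {Done (Suc c mod 3) u}))
        else Bad c)
   | Done c w \<Rightarrow> Done c w
   | Bad c \<Rightarrow> Bad c)"

definition accepting :: "state set" where
  "accepting = {Done c w | c w. odd (length w)}"

definition rejecting :: "state set" where
  "rejecting = {Done c w | c w. even (length w)} \<union> range Bad"

definition parity_automaton :: "(usym, unit) automaton" where
  "parity_automaton = \<lparr> states = UNIV, msgs = UNIV, init = \<lambda>S. to_nat (initial S),
     trans = \<lambda>N q. to_nat (step (from_nat ` N ()) (from_nat q)),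
     msg = \<lambda>q i. q, acc = to_nat ` accepting, rej = to_nat ` rejecting \<rparr>"

lemma is_automaton_parity: "is_automaton parity_automaton"
  unfolding is_automaton_def parity_automaton_def accepting_def rejecting_def
  by (auto dest!: injD[OF inj_to_nat])

primrec run :: "(usym, unit) model \<Rightarrow> nat \<Rightarrow> nat \<Rightarrow> state" where
  "run M 0 x = initial {P. x \<in> val M P}"
| "run M (Suc n) x = step {run M n v | v. (x, v) \<in> rel M ()} (run M n x)"

lemma config_run: "config parity_automaton M n x = to_nat (run M n x)"
proof (induction n arbitrary: x)
  case 0
  then show ?case by (simp add: parity_automaton_def)
next
  case (Suc n)
  have msg: "msg parity_automaton q i = q" for q i
    by (simp add: parity_automaton_def)
  have "from_nat ` {msg parity_automaton (config parity_automaton M n v) () | v. (x, v) \<in> rel M ()}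
        = {run M n v | v. (x, v) \<in> rel M ()}"
    by (auto simp: msg Suc image_iff; metis from_nat_to_nat)
  moreover have "trans parity_automaton N q = to_nat (step (from_nat ` N ()) (from_nat q))" for N q
    by (simp add: parity_automaton_def)
  ultimately show ?case by (simp add: Suc)
qed

lemma accepting_config_iff:
  "config parity_automaton M n x \<in> acc parity_automaton \<longleftrightarrow> run M n x \<in> accepting"
  unfolding config_run by (simp add: parity_automaton_def inj_image_mem_iff)

lemma rejecting_config_iff:
  "config parity_automaton M n x \<in> rej parity_automaton \<longleftrightarrow> run M n x \<in> rejecting"
  unfolding config_run by (simp add: parity_automaton_def inj_image_mem_iff)

lemma final_iff_not_alive: "s \<in> accepting \<union> rejecting \<longleftrightarrow> (\<forall>c w. s \<noteq> Alive c w)"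
  by (cases s) (auto simp: accepting_def rejecting_def)

lemma state_colour_step: "state_colour (step N s) = state_colour s"
  by (cases s) (auto simp: step_def Let_def)

lemma step_final: "\<forall>c w. s \<noteq> Alive c w \<Longrightarrow> step N s = s"
  by (cases s) (auto simp: step_def)

lemma step_no_successor:
  "{t\<in>N. state_colour t = Suc c mod 3} = {} \<Longrightarrow> step N (Alive c w) = Done c w"
  by (simp add: step_def)

lemma step_alive_successor:
  "{t\<in>N. state_colour t = Suc c mod 3} = {Alive (Suc c mod 3) u} \<Longrightarrow>
   step N (Alive c w) = (if has_fifth_power (hd w # u) then Bad c else Alive c (hd w # u))"
  by (simp add: step_def Let_def)

lemma step_done_successor:
  "{t\<in>N. state_colour t = Suc c mod 3} = {Done (Suc c mod 3) u} \<Longrightarrow>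
   step N (Alive c w) = Done c (hd w # u)"
  by (auto simp: step_def Let_def)

lemma step_AliveE:
  assumes "step N s = Alive c w"
  obtains w0 u where "s = Alive c w0" "{t\<in>N. state_colour t = Suc c mod 3} = {Alive (Suc c mod 3) u}"
    "w = hd w0 # u" "\<not> has_fifth_power w"
proof (cases s)
  case (Alive c0 w0)
  let ?S = "{t\<in>N. state_colour t = Suc c0 mod 3}"
  have c0: "c0 = c" using assms Alive state_colour_step[of N s] by simp
  consider "?S = {}" | u where "?S = {Alive (Suc c0 mod 3) u}"
    | "?S \<noteq> {}" "\<nexists>u. ?S = {Alive (Suc c0 mod 3) u}" by blast
  then show ?thesis
  proof cases
    case 1
    then show ?thesis using assms Alive by (simp add: step_no_successor)
  next
    case (2 u)
    then show ?thesis using that assms Alive c0 by (auto simp: step_alive_successor split: if_splits)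
  next
    case 3
    then show ?thesis using assms Alive by (auto simp: step_def Let_def split: if_splits)
  qed
qed (use assms in \<open>auto simp: step_def\<close>)


subsection \<open>Halting on finite models\<close>

definition node_colour :: "(usym, unit) model \<Rightarrow> nat \<Rightarrow> nat" where
  "node_colour M x = colour {P. x \<in> val M P}"

definition successor :: "(usym, unit) model \<Rightarrow> nat \<Rightarrow> nat \<Rightarrow> bool" where
  "successor M x y \<longleftrightarrow> (x, y) \<in> rel M () \<and> node_colour M y = Suc (node_colour M x) mod 3"

lemma state_colour_run: "state_colour (run M n x) = node_colour M x"
  by (induction n arbitrary: x) (auto simp: state_colour_step initial_def node_colour_def)

lemma successor_states:
  "{t\<in>{run M n v | v. (x, v) \<in> rel M ()}. state_colour t = Suc (node_colour M x) mod 3}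
    = {run M n y | y. successor M x y}"
  by (auto simp: successor_def state_colour_run)

lemma run_Suc_AliveE:
  assumes "run M (Suc n) x = Alive c w"
  obtains w0 u where "run M n x = Alive c w0" "\<And>y. successor M x y \<Longrightarrow> run M n y = Alive (Suc c mod 3) u"
    "\<exists>y. successor M x y" "w = hd w0 # u" "\<not> has_fifth_power w"
proof -
  let ?N = "{run M n v | v. (x, v) \<in> rel M ()}"
  obtain w0 u where w0: "run M n x = Alive c w0"
    and S: "{t\<in>?N. state_colour t = Suc c mod 3} = {Alive (Suc c mod 3) u}"
    and w: "w = hd w0 # u" "\<not> has_fifth_power w"
    using assms by (auto elim: step_AliveE)
  have "c = node_colour M x" using state_colour_run[of M n x] w0 by simp
  then have successors: "{run M n y | y. successor M x y} = {Alive (Suc c mod 3) u}"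
    using S successor_states[of M n x] by simp
  then have "\<And>y. successor M x y \<Longrightarrow> run M n y = Alive (Suc c mod 3) u"
    by blast
  moreover have "\<exists>y. successor M x y"
  proof -
    have "Alive (Suc c mod 3) u \<in> {run M n y | y. successor M x y}"
      using successors by simp
    then show ?thesis by blast
  qed
  ultimately show ?thesis using that w0 w by blast
qed

lemma run_Alive_word_shape:
  "run M n x = Alive c w \<Longrightarrow> length w = Suc n \<and> hd w = (x \<in> val M P1)"
proof (induction n arbitrary: x c w)
  case 0
  then show ?case by (auto simp: initial_def)
next
  case (Suc n)
  from Suc.prems obtain w0 u y where x: "run M n x = Alive c w0" and y: "successor M x y"
    and u: "run M n y = Alive (Suc c mod 3) u" and w: "w = hd w0 # u"
    by (elim run_Suc_AliveE) blast
  show ?case using Suc.IH[OF x] Suc.IH[OF u] w by simp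
qed

lemma run_Alive_word:
  assumes "run M n x = Alive c w" "f 0 = x" "\<And>i. i < k \<Longrightarrow> successor M (f i) (f (Suc i))" "k \<le> n"
  shows "w ! k = (f k \<in> val M P1)"
  using assms
proof (induction n arbitrary: x c w f k)
  case 0
  then show ?case using run_Alive_word_shape[OF "0.prems"(1)] by (cases w) auto
next
  case (Suc n)
  show ?case
  proof (cases k)
    case 0
    then show ?thesis using run_Alive_word_shape[OF Suc.prems(1)] Suc.prems(2) by (cases w) auto
  next
    case (Suc k')
    from Suc.prems(1) obtain u where
      next_state: "\<And>y. successor M x y \<Longrightarrow> run M n y = Alive (Suc c mod 3) u"
      and w: "w = hd w # u" by (elim run_Suc_AliveE) auto
    have "successor M x (f 1)" using Suc.prems(2,3) \<open>k = Suc k'\<close> by force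
    then have u: "run M n (f 1) = Alive (Suc c mod 3) u" by (rule next_state)
    have "u ! k' = (f (Suc k') \<in> val M P1)"
      using Suc.IH[OF u, of "\<lambda>i. f (Suc i)" k'] Suc.prems \<open>k = Suc k'\<close> by auto
    then show ?thesis using w \<open>k = Suc k'\<close> by (metis nth_Cons_Suc)
  qed
qed

lemma run_Alive_walk:
  "run M n x = Alive c w \<Longrightarrow> \<exists>f. f 0 = x \<and> (\<forall>i<n. successor M (f i) (f (Suc i)))"
proof (induction n arbitrary: x c w)
  case (Suc n)
  from Suc.prems obtain u y where y: "successor M x y" and u: "run M n y = Alive (Suc c mod 3) u"
    by (elim run_Suc_AliveE) blast
  obtain f where f: "f 0 = y" "\<forall>i<n. successor M (f i) (f (Suc i))"
    using Suc.IH[OF u] by blast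
  let ?g = "\<lambda>i. if i = 0 then x else f (i - 1)"
  have "\<forall>i<Suc n. successor M (?g i) (?g (Suc i))"
  proof (intro allI impI)
    fix i assume "i < Suc n"
    then show "successor M (?g i) (?g (Suc i))" using f y by (cases i) auto
  qed
  then show ?case by (intro exI[of _ ?g]) simp
qed auto

lemma successor_in_dom: "is_model M \<Longrightarrow> successor M x y \<Longrightarrow> y \<in> dom M"
  by (auto simp: successor_def is_model_def)

text \<open>In a finite model every node eventually leaves the Alive states: otherwise a long
  successor walk yields an eventually periodic one, whose word contains a fifth power,
  which the automaton would have detected.\<close>

lemma eventually_final:
  assumes M: "is_model M" and fin: "finite (dom M)" and x: "x \<in> dom M"
  shows "\<exists>n. run M n x \<in> accepting \<union> rejecting"
proof (rule ccontr)
  assume "\<not> ?thesis"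
  then have alive: "\<exists>c w. run M n x = Alive c w" for n
    using final_iff_not_alive by blast
  define N where "N = card (dom M)"
  obtain f where f0: "f 0 = x" and walk: "\<forall>i<N. successor M (f i) (f (Suc i))"
    using alive[of N] run_Alive_walk by blast
  have in_dom: "f i \<in> dom M" if "i \<le> N" for i
    using that
  proof (induction i)
    case (Suc i)
    then have "successor M (f i) (f (Suc i))" using walk by simp
    then show ?case using successor_in_dom[OF M] by blast
  qed (use f0 x in simp)
  obtain g i p where p: "0 < p" and g0: "g 0 = x" and g_walk: "\<forall>k. successor M (g k) (g (Suc k))"
    and periodic: "\<forall>k\<ge>i. g (k + p) = g k"
    using eventually_periodic_walk[OF fin, of f "successor M"] in_dom walk f0 N_def by auto
  define n where "n = i + 5 * p"
  obtain c w where cw: "run M n x = Alive c w" using alive by blast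
  have bits: "w ! k = (g k \<in> val M P1)" if "k \<le> n" for k
    using run_Alive_word[of M n x c w g k] cw g0 g_walk that by blast
  have "has_fifth_power w"
    unfolding has_fifth_power_def
  proof (intro exI conjI allI impI)
    show "i + 5 * p \<le> length w" using run_Alive_word_shape[OF cw] n_def by simp
    fix k assume "i \<le> k" "k < i + 4 * p"
    then show "w ! k = w ! (k + p)" using bits[of k] bits[of "k + p"] periodic n_def by simp
  qed (rule p)
  moreover have "\<not> has_fifth_power w"
  proof -
    have "n = Suc (n - 1)" using p n_def by simp
    then show ?thesis using cw by (metis run_Suc_AliveE)
  qed
  ultimately show False by simp
qed

lemma run_final_stable:
  assumes "run M n x \<in> accepting \<union> rejecting" "n \<le> m"
  shows "run M m x = run M n x"
  using assms(2)
proof (induction m)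
  case (Suc m)
  show ?case
  proof (cases "n = Suc m")
    case False
    then have "run M m x = run M n x" using Suc by simp
    moreover have "\<forall>c w. run M n x \<noteq> Alive c w"
      using assms(1) final_iff_not_alive by blast
    ultimately show ?thesis by (simp add: step_final)
  qed simp
qed simp

lemma halts_parity_automaton: "halts parity_automaton finite_SB"
  unfolding halts_def converges_def
proof (intro conjI ballI)
  fix pm assume "pm \<in> finite_SB"
  then obtain M x where pm: "pm = (M, x)" and M: "is_model M" "finite (dom M)" "x \<in> dom M"
    by (auto simp: finite_SB_def)
  define n where "n = (LEAST n. run M n x \<in> accepting \<union> rejecting)"
  have final: "run M n x \<in> accepting \<union> rejecting"
    unfolding n_def by (rule LeastI_ex) (rule eventually_final[OF M])
  have before: "run M m x \<notin> accepting \<union> rejecting" if "m < n" for m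
    using not_less_Least[of m "\<lambda>n. run M n x \<in> accepting \<union> rejecting"] that
    unfolding n_def by blast
  have "accepts_in parity_automaton M x n \<or> rejects_in parity_automaton M x n"
    unfolding accepts_in_def rejects_in_def accepting_config_iff rejecting_config_iff
    using final before by auto
  then have "accepts parity_automaton M x \<or> rejects parity_automaton M x"
    unfolding accepts_def rejects_def by blast
  then show "case pm of (M, x) \<Rightarrow> accepts parity_automaton M x \<or> rejects parity_automaton M x"
    using pm by simp
next
  fix pm :: "(usym, unit) model \<times> nat"
  obtain M x where pm: "pm = (M, x)" by fastforce
  have stable: "config parity_automaton M m x = config parity_automaton M n x"
    if "config parity_automaton M n x \<in> acc parity_automaton \<union> rej parity_automaton" "n \<le> m"
    for n m
  proof -
    have "run M n x \<in> accepting \<union> rejecting"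
      using that(1) accepting_config_iff rejecting_config_iff by blast
    from run_final_stable[OF this that(2)] show ?thesis by (simp add: config_run)
  qed
  show "case pm of (M, x) \<Rightarrow> \<forall>n. config parity_automaton M n x
      \<in> acc parity_automaton \<union> rej parity_automaton \<and>
      (\<forall>m<n. config parity_automaton M m x \<notin> acc parity_automaton \<union> rej parity_automaton) \<longrightarrow>
      (\<forall>m\<ge>n. config parity_automaton M m x = config parity_automaton M n x)"
    unfolding pm prod.case using stable by blast
qed


subsection \<open>Runs on labelled paths\<close>

text \<open>Node k of a path is coloured k mod 3 and carries P1 iff the period-doubling
  sequence is true at k, so the successor of k is k + 1.\<close>

definition label :: "nat \<Rightarrow> usym set" where
  "label k = (if k mod 3 = 0 then {Q1} else if k mod 3 = 1 then {Q2} else {Q3})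
           \<union> (if period_doubling k then {P1} else {})"

definition path :: "nat \<Rightarrow> (usym, unit) model" where
  "path L = \<lparr> dom = {0..L}, val = \<lambda>P. {k. k \<le> L \<and> P \<in> label k},
     rel = \<lambda>_. {(i, j). i \<le> L \<and> j \<le> L \<and> (j = Suc i \<or> i = Suc j)} \<rparr>"

lemma path_in_finite_SB: "(path L, 0) \<in> finite_SB"
proof -
  have "is_model (path L)" unfolding is_model_def path_def by auto
  moreover have "sym (rel (path L) ())" by (rule symI) (auto simp: path_def)
  moreover have "irrefl (rel (path L) ())" by (rule irreflI) (auto simp: path_def)
  ultimately show ?thesis unfolding finite_SB_def by (simp add: path_def)
qed

lemma labels_path: "k \<le> L \<Longrightarrow> {P. k \<in> val (path L) P} = label k"
  by (auto simp: path_def)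

lemma colour_label: "colour (label k) = k mod 3"
proof -
  have "colour (label k) = (if k mod 3 = 0 then 0 else if k mod 3 = 1 then 1 else 2)"
    by (auto simp: colour_def label_def)
  also have "\<dots> = k mod 3" by presburger
  finally show ?thesis .
qed

lemma node_colour_path: "k \<le> L \<Longrightarrow> node_colour (path L) k = k mod 3"
  by (simp add: node_colour_def labels_path colour_label)

lemma successor_path: "successor (path L) k v \<longleftrightarrow> k < L \<and> v = Suc k"
proof
  assume succ: "successor (path L) k v"
  then have "k \<le> L" "v \<le> L" "v = Suc k \<or> k = Suc v"
    by (auto simp: successor_def path_def)
  moreover have "v mod 3 = Suc (k mod 3) mod 3"
    using succ \<open>k \<le> L\<close> \<open>v \<le> L\<close> by (simp add: successor_def node_colour_path)
  moreover have "k \<noteq> Suc v"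
  proof
    assume "k = Suc v"
    then have "v mod 3 = Suc (Suc v mod 3) mod 3" using \<open>v mod 3 = _\<close> by simp
    then show False by presburger
  qed
  ultimately show "k < L \<and> v = Suc k" by auto
next
  assume "k < L \<and> v = Suc k"
  moreover have "(k, Suc k) \<in> rel (path L) ()" if "k < L"
    using that by (simp add: path_def)
  ultimately show "successor (path L) k v"
    by (auto simp: successor_def node_colour_path mod_Suc_eq)
qed

definition pd_word :: "nat \<Rightarrow> nat \<Rightarrow> bool list" where
  "pd_word k n = map period_doubling [k..<k + n]"

lemma pd_word_Suc: "pd_word k (Suc n) = period_doubling k # pd_word (Suc k) n"
  unfolding pd_word_def by (simp add: upt_conv_Cons del: upt_Suc)

lemma run_path:
  "k \<le> L \<Longrightarrow> run (path L) m k = (if k + m \<le> L then Alive (k mod 3) (pd_word k (Suc m))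
      else Done (k mod 3) (pd_word k (Suc L - k)))"
proof (induction m arbitrary: k)
  case 0
  then show ?case
    by (simp add: initial_def labels_path colour_label pd_word_def) (simp add: label_def)
next
  case (Suc m)
  let ?S = "{t\<in>{run (path L) m v | v. (k, v) \<in> rel (path L) ()}. state_colour t = Suc (k mod 3) mod 3}"
  have S: "?S = {run (path L) m v | v. k < L \<and> v = Suc k}"
    using successor_states[of "path L" m k] Suc.prems by (simp add: node_colour_path successor_path)
  have run_Suc: "run (path L) (Suc m) k = step {run (path L) m v | v. (k, v) \<in> rel (path L) ()} (run (path L) m k)"
    by simp
  consider (alive) "k + Suc m \<le> L" | (last) "k + m = L" "k = L" | (freeze) "k + m = L" "k < L"
    | (frozen) "L < k + m" by linarith
  then show ?case
  proof cases
    case alive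
    have "run (path L) m k = Alive (k mod 3) (pd_word k (Suc m))"
      using Suc alive by simp
    moreover have "?S = {Alive (Suc (k mod 3) mod 3) (pd_word (Suc k) (Suc m))}"
      using S Suc.IH[of "Suc k"] alive by (simp add: mod_Suc_eq)
    moreover have "\<not> has_fifth_power (pd_word k (Suc (Suc m)))"
      unfolding pd_word_def by (rule period_doubling_fifth_power_free)
    ultimately show ?thesis
      using alive by (simp add: step_alive_successor pd_word_Suc)
  next
    case last
    then have "m = 0" by simp
    moreover have "?S = {}" using S last by simp
    ultimately show ?thesis
      using Suc last by (simp add: step_no_successor)
  next
    case freeze
    have "run (path L) m k = Alive (k mod 3) (pd_word k (Suc m))"
      using Suc freeze by simp
    moreover have "?S = {Done (Suc (k mod 3) mod 3) (pd_word (Suc k) (Suc L - Suc k))}"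
      using S Suc.IH[of "Suc k"] freeze by (simp add: mod_Suc_eq)
    moreover have "Suc L - k = Suc (Suc L - Suc k)" using freeze by simp
    ultimately show ?thesis
      using freeze by (simp add: step_done_successor pd_word_Suc)
  next
    case frozen
    then have "run (path L) m k = Done (k mod 3) (pd_word k (Suc L - k))"
      using Suc by simp
    then show ?thesis using frozen by (simp add: step_final)
  qed
qed

lemma accepts_path_iff_even: "accepts parity_automaton (path L) 0 \<longleftrightarrow> even L"
proof -
  have run0: "run (path L) n 0 = (if n \<le> L then Alive 0 (pd_word 0 (Suc n)) else Done 0 (pd_word 0 (Suc L)))"
    for n using run_path[of 0 L n] by simp
  have length_pd_word: "length (pd_word k n) = n" for k n by (simp add: pd_word_def)
  show ?thesis
  proof
    assume "accepts parity_automaton (path L) 0"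
    then obtain n where "run (path L) n 0 \<in> accepting"
      unfolding accepts_def accepts_in_def accepting_config_iff by blast
    then show "even L" using run0[of n] length_pd_word by (auto simp: accepting_def split: if_splits)
  next
    assume "even L"
    have "run (path L) (Suc L) 0 = Done 0 (pd_word 0 (Suc L))"
      by (subst run0) simp
    moreover have "run (path L) m 0 \<notin> rejecting" if "m < Suc L" for m
      using that by (subst run0) (auto simp: rejecting_def)
    ultimately have "accepts_in parity_automaton (path L) 0 (Suc L)"
      unfolding accepts_in_def accepting_config_iff rejecting_config_iff
      using \<open>even L\<close> length_pd_word by (simp add: accepting_def)
    then show "accepts parity_automaton (path L) 0" by (auto simp: accepts_def)
  qed
qed

lemma agree_paths: "k + m \<le> L1 \<Longrightarrow> k + m \<le> L2 \<Longrightarrow> agree (path L1) (path L2) m k"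
proof (induction m arbitrary: k)
  case 0
  then show ?case using labels_path[of k L1] labels_path[of k L2] by simp
next
  case (Suc m)
  have "agree (path L1) (path L2) m v" if "(k, v) \<in> rel (path L1) i" for i v
    using that Suc by (intro Suc.IH) (auto simp: path_def)
  moreover have "agree (path L1) (path L2) m k"
    using Suc by (intro Suc.IH) auto
  moreover have "(k, v) \<in> rel (path L1) i \<longleftrightarrow> (k, v) \<in> rel (path L2) i" for i v
    using Suc.prems by (auto simp: path_def)
  ultimately show ?case by simp
qed


theorem theorem3p1:
  shows "\<exists>A :: (usym, unit) automaton. is_automaton A \<and>
           halts A finite_SB \<and> strongly_nonlocal A finite_SB"
proof (intro exI conjI)
  show "is_automaton parity_automaton" by (rule is_automaton_parity)
  show "halts parity_automaton finite_SB" by (rule halts_parity_automaton)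
  show "strongly_nonlocal parity_automaton finite_SB"
  proof (rule strongly_nonlocal_if_indistinguishable)
    fix n
    have "agree (path (2 * n + 2)) (path (2 * n + 3)) n 0"
      by (rule agree_paths) simp_all
    moreover have "accepts parity_automaton (path (2 * n + 2)) 0"
      "\<not> accepts parity_automaton (path (2 * n + 3)) 0"
      by (simp_all add: accepts_path_iff_even)
    ultimately show "\<exists>M1 M2 w. (M1, w) \<in> finite_SB \<and> (M2, w) \<in> finite_SB \<and>
        agree M1 M2 n w \<and> accepts parity_automaton M1 w \<and> \<not> accepts parity_automaton M2 w"
      using path_in_finite_SB by blast
  qed
qed

end
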